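(* Let $\omega$ be a nondegenerate skew-symmetric $2$-cocycle on a Leibniz algebra $(A,\circ_A)$, and define multiplications $\succ_A,\prec_A$ on $A$ by $$\omega(x\succ_A y,z)=\omega(y,x\circ_A z),\qquad \omega(x\prec_A y,z)=-\omega(x,y\circ_A z+z\circ_A y),\quad\forall x,y,z\in A.$$ Then $(A,\succ_A,\prec_A)$ is an anti-pre-Leibniz algebra (with $x\succ_A y+x\prec_A y=x\circ_A y$). Moreover, $(-\mathcal L_{\succ_A},-\mathcal R_{\prec_A},A)$ and $(\mathcal L^*_{\circ_A},-\mathcal L^*_{\circ_A}-\mathcal R^*_{\circ_A},A^* )$ are equivalent representations of $(A,\circ_A)$ (via $\omega^\natural$), and $(\mathcal L_{\circ_A},\mathcal R_{\circ_A},A)$ and $(-\mathcal L^*_{\succ_A},\mathcal L^*_{\succ_A}+\mathcal R^*_{\prec_A},A^* )$ are equivalent representations of $(A,\circ_A)$ (via $(\omega^\natural)^*$).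
   Context: All vector spaces are finite-dimensional over a field $\mathbb K$ of characteristic zero. For a multiplication $\ast$, $\mathcal L_\ast(x)y=x\ast y$, $\mathcal R_\ast(x)y=y\ast x$; for $f:A\to\mathrm{End}(V)$, $f^*:A\to\mathrm{End}(V^* )$ is $\langle f^*(x)u^*,v\rangle=-\langle u^*,f(x)v\rangle$. For a bilinear form $\omega$, $\omega^\natural:A\to A^*$ is $\langle\omega^\natural(u),v\rangle=\omega(u,v)$. A Leibniz algebra is a vector space $A$ with a multiplication $\circ_A$ satisfying $x\circ_A(y\circ_A z)=(x\circ_A y)\circ_A z+y\circ_A(x\circ_A z)$. A representation of $(A,\circ_A)$ is a triple $(l,r,V)$ with linear maps $l,r:A\to\mathrm{End}(V)$ such that for all $x,y\in A,v\in V$: $l(x\circ_A y)v=l(x)l(y)v-l(y)l(x)v$; $r(x\circ_A y)v=l(x)r(y)v-r(y)l(x)v$; $r(y)l(x)v=-r(y)r(x)v$. Two representations $(l,r,V)$, $(l',r',V')$ are equivalent if there is a linear isomorphism $\phi:V\to V'$ with $\phi l(x)=l'(x)\phi$ and $\phi r(x)=r'(x)\phi$ for all $x$. A bilinear form $\omega$ on $(A,\circ_A)$ is a $2$-cocycle if $\omega(z,x\circ_A y)=\omega(x,y\circ_A z+z\circ_A y)-\omega(y,x\circ_A z)$ for all $x,y,z$. An anti-pre-Leibniz algebra is a vector space $A$ with multiplications $\succ_A,\prec_A$ such that, with $x\circ y=x\succ_A y+x\prec_A y$, for all $x,y,z$: (AL1) $(x\circ y)\prec_A z=x\succ_A(y\circ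 z)-y\succ_A(x\circ z)$; (AL2) $(x\circ y)\succ_A z=y\succ_A(x\succ_A z)-x\succ_A(y\succ_A z)$; (AL3) $x\prec_A(y\circ z)=(y\succ_A x)\prec_A z-y\succ_A(x\prec_A z)$; (AL4) $(x\succ_A y)\prec_A z=-(y\prec_A x)\prec_A z$. *)

theory Defs
  imports Complex_Main "HOL-Library.Function_Algebras"
begin

(* A is a type 'a with scalar multiplication sA :: 'k => 'a => 'a over a field 'k.
   Multiplications and bilinear forms are curried functions. *)

definition bilinear_map :: "('k::field \<Rightarrow> 'a::ab_group_add \<Rightarrow> 'a) \<Rightarrow> ('a \<Rightarrow> 'a \<Rightarrow> 'a) \<Rightarrow> bool" where
  "bilinear_map sA m \<longleftrightarrow>
     (\<forall>x. Vector_Spaces.linear sA sA (m x)) \<and> (\<forall>y. Vector_Spaces.linear sA sA (\<lambda>x. m x y))"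

definition bilinear_form :: "('k::field \<Rightarrow> 'a::ab_group_add \<Rightarrow> 'a) \<Rightarrow> ('a \<Rightarrow> 'a \<Rightarrow> 'k) \<Rightarrow> bool" where
  "bilinear_form sA w \<longleftrightarrow>
     (\<forall>x. Vector_Spaces.linear sA (*) (w x)) \<and> (\<forall>y. Vector_Spaces.linear sA (*) (\<lambda>x. w x y))"

definition leibniz_algebra :: "('k::field \<Rightarrow> 'a::ab_group_add \<Rightarrow> 'a) \<Rightarrow> ('a \<Rightarrow> 'a \<Rightarrow> 'a) \<Rightarrow> bool" where
  "leibniz_algebra sA m \<longleftrightarrow> bilinear_map sA m \<and>
     (\<forall>x y z. m x (m y z) = m (m x y) z + m y (m x z))"

definition anti_pre_leibniz :: "('k::field \<Rightarrow> 'a::ab_group_add \<Rightarrow> 'a) \<Rightarrow> ('a \<Rightarrow> 'a \<Rightarrow> 'a) \<Rightarrow> ('a \<Rightarrow> 'a \<Rightarrow> 'a) \<Rightarrow> bool" where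
  "anti_pre_leibniz sA succ prec \<longleftrightarrow> bilinear_map sA succ \<and> bilinear_map sA prec \<and>
     (let c = (\<lambda>x y. succ x y + prec x y) in
      (\<forall>x y z. prec (c x y) z = succ x (c y z) - succ y (c x z)) \<and>
      (\<forall>x y z. succ (c x y) z = succ y (succ x z) - succ x (succ y z)) \<and>
      (\<forall>x y z. prec x (c y z) = prec (succ y x) z - succ y (prec x z)) \<and>
      (\<forall>x y z. prec (succ x y) z = - prec (prec y x) z))"

definition skew_symmetric :: "('a \<Rightarrow> 'a \<Rightarrow> 'k::field) \<Rightarrow> bool" where
  "skew_symmetric w \<longleftrightarrow> (\<forall>x y. w x y = - w y x)"

definition nondegenerate :: "('a::ab_group_add \<Rightarrow> 'a \<Rightarrow> 'k::field) \<Rightarrow> bool" where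
  "nondegenerate w \<longleftrightarrow> (\<forall>x. (\<forall>y. w x y = 0) \<longrightarrow> x = 0)"

definition two_cocycle :: "('a::ab_group_add \<Rightarrow> 'a \<Rightarrow> 'a) \<Rightarrow> ('a \<Rightarrow> 'a \<Rightarrow> 'k::field) \<Rightarrow> bool" where
  "two_cocycle m w \<longleftrightarrow>
     (\<forall>x y z. w z (m x y) = w x (m y z + m z y) - w y (m x z))"

definition dual_space :: "('k::field \<Rightarrow> 'a::ab_group_add \<Rightarrow> 'a) \<Rightarrow> ('a \<Rightarrow> 'k) set" where
  "dual_space sA = {f. Vector_Spaces.linear sA (*) f}"

definition dual_scale :: "'k::field \<Rightarrow> ('a \<Rightarrow> 'k) \<Rightarrow> ('a \<Rightarrow> 'k)" where
  "dual_scale c f = (\<lambda>v. c * f v)"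

definition dual_op :: "('a \<Rightarrow> 'a \<Rightarrow> 'a) \<Rightarrow> 'a \<Rightarrow> ('a \<Rightarrow> 'k::field) \<Rightarrow> ('a \<Rightarrow> 'k)" where
  "dual_op f x u = (\<lambda>v. - u (f x v))"

definition Lmul :: "('a \<Rightarrow> 'a \<Rightarrow> 'a) \<Rightarrow> 'a \<Rightarrow> 'a \<Rightarrow> 'a" where
  "Lmul m x y = m x y"
definition Rmul :: "('a \<Rightarrow> 'a \<Rightarrow> 'a) \<Rightarrow> 'a \<Rightarrow> 'a \<Rightarrow> 'a" where
  "Rmul m x y = m y x"

definition flat :: "('a \<Rightarrow> 'a \<Rightarrow> 'k) \<Rightarrow> 'a \<Rightarrow> ('a \<Rightarrow> 'k)" where
  "flat w u = (\<lambda>v. w u v)"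

definition linear_on ::
  "('k::field \<Rightarrow> 'v::ab_group_add \<Rightarrow> 'v) \<Rightarrow> 'v set \<Rightarrow> ('k \<Rightarrow> 'w::ab_group_add \<Rightarrow> 'w) \<Rightarrow> 'w set \<Rightarrow> ('v \<Rightarrow> 'w) \<Rightarrow> bool" where
  "linear_on sV V sW W f \<longleftrightarrow> (\<forall>v\<in>V. f v \<in> W) \<and>
     (\<forall>u\<in>V. \<forall>v\<in>V. f (u + v) = f u + f v) \<and> (\<forall>c. \<forall>v\<in>V. f (sV c v) = sW c (f v))"

definition leibniz_rep ::
  "('k::field \<Rightarrow> 'a::ab_group_add \<Rightarrow> 'a) \<Rightarrow> ('a \<Rightarrow> 'a \<Rightarrow> 'a) \<Rightarrow>
   ('k \<Rightarrow> 'v::ab_group_add \<Rightarrow> 'v) \<Rightarrow> 'v set \<Rightarrow> ('a \<Rightarrow> 'v \<Rightarrow> 'v) \<Rightarrow> ('a \<Rightarrow> 'v \<Rightarrow> 'v) \<Rightarrow> bool" where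
  "leibniz_rep sA m sV V l r \<longleftrightarrow>
     vector_space sV \<and> module.subspace sV V \<and>
     (\<forall>x. linear_on sV V sV V (l x) \<and> linear_on sV V sV V (r x)) \<and>
     (\<forall>x y. \<forall>v\<in>V. l (x + y) v = l x v + l y v \<and> r (x + y) v = r x v + r y v) \<and>
     (\<forall>c x. \<forall>v\<in>V. l (sA c x) v = sV c (l x v) \<and> r (sA c x) v = sV c (r x v)) \<and>
     (\<forall>x y. \<forall>v\<in>V. l (m x y) v = l x (l y v) - l y (l x v)) \<and>
     (\<forall>x y. \<forall>v\<in>V. r (m x y) v = l x (r y v) - r y (l x v)) \<and>
     (\<forall>x y. \<forall>v\<in>V. r y (l x v) = - r y (r x v))"

definition rep_equiv_via ::
  "('k::field \<Rightarrow> 'v::ab_group_add \<Rightarrow> 'v) \<Rightarrow> 'v set \<Rightarrow> ('a \<Rightarrow> 'v \<Rightarrow> 'v) \<Rightarrow> ('a \<Rightarrow> 'v \<Rightarrow> 'v) \<Rightarrow>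
   ('k \<Rightarrow> 'w::ab_group_add \<Rightarrow> 'w) \<Rightarrow> 'w set \<Rightarrow> ('a \<Rightarrow> 'w \<Rightarrow> 'w) \<Rightarrow> ('a \<Rightarrow> 'w \<Rightarrow> 'w) \<Rightarrow>
   ('v \<Rightarrow> 'w) \<Rightarrow> bool" where
  "rep_equiv_via sV V l r sW W l' r' phi \<longleftrightarrow>
     linear_on sV V sW W phi \<and> bij_betw phi V W \<and>
     (\<forall>x. \<forall>v\<in>V. phi (l x v) = l' x (phi v) \<and> phi (r x v) = r' x (phi v))"

end

theory Submission
  imports Defs
begin

text \<open>Nondegeneracy turns every identity between \<open>\<succ>\<close> and \<open>\<prec>\<close> into an identity of
  \<open>\<circ>\<close> paired with \<open>\<omega>\<close>: this way the cocycle condition gives \<open>\<succ> + \<prec> = \<circ>\<close>, and the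
  Leibniz identity gives (AL2)--(AL4), which are exactly the axioms saying that
  \<open>(-\<L>\<^sub>\<succ>, -\<R>\<^sub>\<prec>, A)\<close> is a representation. (AL1) is then forced by the Leibniz identity
  of \<open>\<circ> = \<succ> + \<prec>\<close>. The defining equations of \<open>\<succ>\<close> and \<open>\<prec>\<close> say literally that
  \<open>\<omega>\<^sup>\<natural>\<close> and \<open>(\<omega>\<^sup>\<natural>)\<^sup>*\<close> intertwine the stated pairs of operators; both maps are
  bijections onto \<open>A\<^sup>*\<close> since \<open>A\<close> is finite-dimensional, so the two dual representations
  are obtained by transporting \<open>(-\<L>\<^sub>\<succ>, -\<R>\<^sub>\<prec>, A)\<close> and the adjoint representation.\<close>

lemma linear_simps:
  assumes "Vector_Spaces.linear s1 s2 f"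
  shows "f (a + b) = f a + f b" "f (a - b) = f a - f b" "f (- a) = - f a" "f 0 = 0"
    "f (s1 c a) = s2 c (f a)"
proof -
  interpret module_hom s1 s2 f
    using assms by (simp add: module_hom_iff_linear)
  show "f (a + b) = f a + f b" "f (a - b) = f a - f b" "f (- a) = - f a" "f 0 = 0"
    "f (s1 c a) = s2 c (f a)"
    by (simp_all add: add diff neg scale)
qed

lemma leibniz_mult_left:
  assumes "leibniz_algebra sA m"
  shows "m (m x y) z = m x (m y z) - m y (m x z)"
proof -
  have "m x (m y z) = m (m x y) z + m y (m x z)"
    using assms unfolding leibniz_algebra_def by blast
  then show ?thesis by simp
qed

lemma leibniz_left_skew:
  assumes "leibniz_algebra sA m"
  shows "m (m x y) z = - m (m y x) z"
  using leibniz_mult_left[OF assms, of x y z] leibniz_mult_left[OF assms, of y x z] by simp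

lemma leibniz_rep_adjoint:
  assumes "vector_space sA" and leibniz: "leibniz_algebra sA m"
  shows "leibniz_rep sA m sA UNIV (Lmul m) (Rmul m)"
proof -
  interpret vector_space sA by fact
  have bil: "Vector_Spaces.linear sA sA (m x)" "Vector_Spaces.linear sA sA (\<lambda>y. m y x)" for x
    using leibniz by (simp_all add: leibniz_algebra_def bilinear_map_def)
  have right: "m v (m x y) = m x (m v y) - m (m x v) y" for x y v
    using leibniz_mult_left[OF leibniz, of x v y] by simp
  show ?thesis
    unfolding leibniz_rep_def linear_on_def Lmul_def Rmul_def
    by (intro conjI allI ballI UNIV_I assms(1) subspace_UNIV right
        leibniz_mult_left[OF leibniz] leibniz_left_skew[OF leibniz]
        linear_simps(1,5)[OF bil(1)] linear_simps(1,5)[OF bil(2)])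
qed

lemma leibniz_rep_transfer:
  assumes rep: "leibniz_rep sA m sV V l r"
    and W: "vector_space sW" "module.subspace sW W"
    and equiv: "rep_equiv_via sV V l r sW W l' r' phi"
  shows "leibniz_rep sA m sW W l' r'"
proof -
  interpret V: vector_space sV using rep by (simp add: leibniz_rep_def)
  have "V.subspace V" using rep by (simp add: leibniz_rep_def)
  have W_eq: "W = phi ` V" using equiv by (simp add: rep_equiv_via_def bij_betw_def)
  interpret W: vector_space sW by (fact W(1))
  have phi_add: "phi (u + v) = phi u + phi v" if "u \<in> V" "v \<in> V" for u v
    using equiv that by (simp add: rep_equiv_via_def linear_on_def)
  have phi_scale: "phi (sV c v) = sW c (phi v)" if "v \<in> V" for c v
    using equiv that by (simp add: rep_equiv_via_def linear_on_def)
  have phi_neg: "phi (- v) = - phi v" if "v \<in> V" for v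
    using phi_scale[OF that, of "-1"] by simp
  have phi_diff: "phi (u - v) = phi u - phi v" if "u \<in> V" "v \<in> V" for u v
    using phi_add[of u "- v"] phi_neg[of v] that \<open>V.subspace V\<close> V.subspace_neg by force
  have l': "l' x (phi v) = phi (l x v)" and r': "r' x (phi v) = phi (r x v)" if "v \<in> V" for x v
    using equiv that by (simp_all add: rep_equiv_via_def)
  have lr_in: "l x v \<in> V" "r x v \<in> V" if "v \<in> V" for x v
    using rep that by (simp_all add: leibniz_rep_def linear_on_def)
  have ball_W: "(\<forall>w\<in>W. P w) \<longleftrightarrow> (\<forall>v\<in>V. P (phi v))" for P
    by (simp add: W_eq)
  have "\<And>u v. u \<in> V \<Longrightarrow> v \<in> V \<Longrightarrow> u + v \<in> V" "\<And>c v. v \<in> V \<Longrightarrow> sV c v \<in> V"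
    "\<And>v. v \<in> V \<Longrightarrow> - v \<in> V" "\<And>v. v \<in> V \<Longrightarrow> phi v \<in> W"
    using \<open>V.subspace V\<close> V.subspace_add V.subspace_scale V.subspace_neg W_eq by blast+
  \<comment> \<open>Read right to left, the rules for \<open>phi\<close> reduce each axiom on \<open>W\<close> to its image under \<open>phi\<close>.\<close>
  then show ?thesis
    using rep W unfolding leibniz_rep_def linear_on_def ball_W
    by (simp add: phi_add[symmetric] phi_scale[symmetric] phi_diff[symmetric] phi_neg[symmetric]
        l' r' lr_in)
qed

lemma anti_pre_leibnizI:
  fixes sA :: "'k::field_char_0 \<Rightarrow> 'a::ab_group_add \<Rightarrow> 'a"
  assumes "vector_space sA" "bilinear_map sA succ" "bilinear_map sA prec"
    and leibniz: "leibniz_algebra sA circ"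
    and sum: "\<And>x y. succ x y + prec x y = circ x y"
    and AL2: "\<And>x y z. succ (circ x y) z = succ y (succ x z) - succ x (succ y z)"
    and AL3: "\<And>x y z. prec x (circ y z) = prec (succ y x) z - succ y (prec x z)"
    and AL4: "\<And>x y z. prec (succ x y) z = - prec (prec y x) z"
  shows "anti_pre_leibniz sA succ prec"
proof -
  interpret vector_space sA by fact
  have succ_add: "succ x (u + v) = succ x u + succ x v" for x u v
    using assms(2) linear_simps(1)[of sA sA "succ x"] by (simp add: bilinear_map_def)
  have prec_add: "prec (u + v) z = prec u z + prec v z" for u v z
    using assms(3) linear_simps(1)[of sA sA "\<lambda>x. prec x z"] by (simp add: bilinear_map_def)
  have AL1: "prec (circ x y) z = succ x (circ y z) - succ y (circ x z)" for x y z
  proof -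
    let ?d = "prec (circ x y) z - (succ x (circ y z) - succ y (circ x z))"
    have leibniz_xyz: "circ (circ x y) z + circ y (circ x z) - circ x (circ y z) = 0"
      using leibniz_mult_left[OF leibniz, of x y z] by simp
    have "succ y (circ x z) = succ y (succ x z) + succ y (prec x z)"
      "succ x (circ y z) = succ x (succ y z) + succ x (prec y z)"
      "prec (circ x y) z = prec (succ x y) z + prec (prec x y) z"
      by (simp_all flip: sum add: succ_add prec_add)
    \<comment> \<open>(AL2)--(AL4) turn the Leibniz identity into twice (AL1); hence characteristic 0.\<close>
    then have "?d + ?d = circ (circ x y) z + circ y (circ x z) - circ x (circ y z)"
      by (simp add: sum[symmetric, of x "circ y z"] sum[symmetric, of "circ x y" z]
          sum[symmetric, of y "circ x z"] AL2 AL3 AL4[of y x] algebra_simps)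
    then have "?d + ?d = 0"
      using leibniz_xyz by simp
    have "?d = sA (1/2 + 1/2) ?d" by simp
    also have "\<dots> = sA (1/2) (?d + ?d)" by (simp only: scale_left_distrib scale_right_distrib)
    finally show ?thesis using \<open>?d + ?d = 0\<close> by simp
  qed
  have "(\<lambda>x y. succ x y + prec x y) = circ" by (simp add: sum fun_eq_iff)
  then show ?thesis
    using assms(2,3) AL1 AL2 AL3 AL4 by (simp add: anti_pre_leibniz_def)
qed

lemma vector_space_dual_scale: "vector_space (dual_scale :: 'k::field \<Rightarrow> ('a \<Rightarrow> 'k) \<Rightarrow> 'a \<Rightarrow> 'k)"
  by (simp add: vector_space_def dual_scale_def fun_eq_iff algebra_simps)

lemma vector_space_mult: "vector_space ((*) :: 'k::field \<Rightarrow> 'k \<Rightarrow> 'k)"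
  by (simp add: vector_space_def algebra_simps)

lemma subspace_dual_space:
  fixes sA :: "'k::field \<Rightarrow> 'a::ab_group_add \<Rightarrow> 'a"
  assumes "vector_space sA"
  shows "module.subspace dual_scale (dual_space sA)"
proof -
  interpret D: vector_space "dual_scale :: 'k::field \<Rightarrow> ('a \<Rightarrow> 'k) \<Rightarrow> 'a \<Rightarrow> 'k"
    by (rule vector_space_dual_scale)
  show ?thesis
    unfolding D.subspace_def dual_space_def
    by (simp add: Vector_Spaces.linear_iff assms vector_space_mult dual_scale_def algebra_simps)
qed

lemma dual_space_eq_on_Basis:
  fixes sA :: "'k::field \<Rightarrow> 'a::ab_group_add \<Rightarrow> 'a"
  assumes "finite_dimensional_vector_space sA B" and "f \<in> dual_space sA" "g \<in> dual_space sA"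
    and "\<And>b. b \<in> B \<Longrightarrow> f b = g b"
  shows "f = g"
proof
  fix v
  interpret A: finite_dimensional_vector_space sA B by fact
  interpret vector_space_pair sA "(*) :: 'k \<Rightarrow> 'k \<Rightarrow> 'k"
    by (intro vector_space_pair.intro A.vector_space_axioms vector_space_mult)
  show "f v = g v"
    using assms(2-4) A.span_Basis by (intro linear_eq_on[of f g v B]) (auto simp: dual_space_def)
qed

lemma flat_eq_self [simp]: "flat w = w"
  by (rule ext) (simp add: flat_def)

lemma nondegenerate_eqI:
  assumes "bilinear_form sA w" and "nondegenerate w" and "w u = w u'"
  shows "u = u'"
proof -
  have "w (u - u') v = w u v - w u' v" for v
    using assms(1) linear_simps(2)[of sA "(*)" "\<lambda>u. w u v"] by (simp add: bilinear_form_def)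
  then have "w (u - u') v = 0" for v
    using assms(3) by simp
  then have "u - u' = 0"
    using assms(2) unfolding nondegenerate_def by blast
  then show ?thesis by simp
qed

lemma nondegenerate_range_dual_space:
  assumes fd: "finite_dimensional_vector_space sA B"
    and bil: "bilinear_form sA w" and nondeg: "nondegenerate w"
    and f: "f \<in> dual_space sA"
  shows "f \<in> range w"
proof -
  interpret A: finite_dimensional_vector_space sA B by fact
  have w_right: "w u \<in> dual_space sA" for u
    using bil by (simp add: bilinear_form_def dual_space_def)
  have coords_eqI: "c b = d b"
    if "(\<Sum>b\<in>B. sA (c b) b) = (\<Sum>b\<in>B. sA (d b) b)" "b \<in> B" for c d b
  proof -
    have "(\<Sum>b\<in>B. sA (c b - d b) b) = 0"
      using that(1) by (simp add: A.scale_left_diff_distrib sum_subtractf)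
    then show ?thesis
      using A.independent_Basis A.finite_Basis that(2) by (auto simp: A.independent_explicit)
  qed
  \<comment> \<open>\<open>M u\<close> has the coordinates of \<open>w u\<close>; an injective endomorphism of \<open>A\<close> is onto.\<close>
  define M where "M u = (\<Sum>b\<in>B. sA (w u b) b)" for u
  have w_left: "Vector_Spaces.linear sA (*) (\<lambda>u. w u v)" for v
    using bil by (simp add: bilinear_form_def)
  have "Vector_Spaces.linear sA sA M"
    by (simp add: Vector_Spaces.linear_iff A.vector_space_axioms M_def linear_simps[OF w_left]
        A.scale_left_distrib sum.distrib A.scale_sum_right)
  moreover have "inj M"
  proof (rule injI)
    fix u u' assume "M u = M u'"
    then have "w u b = w u' b" if "b \<in> B" for b
      using coords_eqI[of "w u" "w u'"] that by (simp add: M_def)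
    then have "w u = w u'" by (rule dual_space_eq_on_Basis[OF fd w_right w_right])
    then show "u = u'" by (rule nondegenerate_eqI[OF bil nondeg])
  qed
  ultimately have "surj M" by (rule A.linear_inj_imp_surj)
  then obtain u where "M u = (\<Sum>b\<in>B. sA (f b) b)"
    by (metis surjD)
  then have "w u b = f b" if "b \<in> B" for b
    using coords_eqI[of "w u" f] that by (simp add: M_def)
  then have "w u = f" by (rule dual_space_eq_on_Basis[OF fd w_right f])
  then show ?thesis by blast
qed

lemma bij_betw_flat_dual_space:
  assumes "finite_dimensional_vector_space sA B"
    and "bilinear_form sA w" and "nondegenerate w"
  shows "bij_betw (flat w) UNIV (dual_space sA)"
proof -
  have "range w \<subseteq> dual_space sA"
    using assms(2) by (auto simp: bilinear_form_def dual_space_def)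
  then show ?thesis
    using nondegenerate_range_dual_space[OF assms] nondegenerate_eqI[OF assms(2,3)]
    by (auto intro!: bij_betw_imageI injI)
qed

locale symplectic_leibniz =
  fixes sA :: "'k::field_char_0 \<Rightarrow> 'a::ab_group_add \<Rightarrow> 'a"
    and B :: "'a set"
    and circ :: "'a \<Rightarrow> 'a \<Rightarrow> 'a"
    and w :: "'a \<Rightarrow> 'a \<Rightarrow> 'k"
    and succ prec :: "'a \<Rightarrow> 'a \<Rightarrow> 'a"
  assumes finite_dim: "finite_dimensional_vector_space sA B"
    and leibniz: "leibniz_algebra sA circ"
    and bilinear: "bilinear_form sA w"
    and skew: "skew_symmetric w"
    and nondeg: "nondegenerate w"
    and cocycle: "two_cocycle circ w"
    and w_succ: "\<And>x y z. w (succ x y) z = w y (circ x z)"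
    and w_prec: "\<And>x y z. w (prec x y) z = - w x (circ y z + circ z y)"
begin

sublocale A: finite_dimensional_vector_space sA B by (fact finite_dim)

lemma w_linear: "Vector_Spaces.linear sA (*) (w x)" "Vector_Spaces.linear sA (*) (\<lambda>x. w x y)"
  using bilinear by (simp_all add: bilinear_form_def)

lemma circ_linear: "Vector_Spaces.linear sA sA (circ x)" "Vector_Spaces.linear sA sA (\<lambda>x. circ x y)"
  using leibniz by (simp_all add: leibniz_algebra_def bilinear_map_def)

lemmas w_simps[simp] = linear_simps[OF w_linear(1)] linear_simps[OF w_linear(2)]
lemmas circ_simps[simp] = linear_simps[OF circ_linear(1)] linear_simps[OF circ_linear(2)]

lemma w_eqI: "(\<And>t. w a t = w b t) \<Longrightarrow> a = b"
  by (rule nondegenerate_eqI[OF bilinear nondeg]) (rule ext)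

lemma w_skew: "w a b = - w b a"
  using skew unfolding skew_symmetric_def by blast

lemma w_cocycle: "w z (circ x y) = w x (circ y z) + w x (circ z y) - w y (circ x z)"
proof -
  have "w z (circ x y) = w x (circ y z + circ z y) - w y (circ x z)"
    using cocycle unfolding two_cocycle_def by blast
  then show ?thesis by simp
qed

lemma succ_linear: "Vector_Spaces.linear sA sA (succ x)" "Vector_Spaces.linear sA sA (\<lambda>x. succ x y)"
  by (simp_all add: Vector_Spaces.linear_iff A.vector_space_axioms) (auto intro: w_eqI simp: w_succ)

lemma prec_linear: "Vector_Spaces.linear sA sA (prec x)" "Vector_Spaces.linear sA sA (\<lambda>x. prec x y)"
  by (simp_all add: Vector_Spaces.linear_iff A.vector_space_axioms)
    (auto intro: w_eqI simp: w_prec algebra_simps)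

lemmas succ_simps[simp] = linear_simps[OF succ_linear(1)] linear_simps[OF succ_linear(2)]
lemmas prec_simps[simp] = linear_simps[OF prec_linear(1)] linear_simps[OF prec_linear(2)]

lemma succ_plus_prec: "succ x y + prec x y = circ x y"
  by (rule w_eqI) (simp add: w_succ w_prec w_skew[of "circ x y"] w_cocycle[of _ x y])

lemma succ_circ_left: "succ (circ x y) z = succ y (succ x z) - succ x (succ y z)"
  by (rule w_eqI) (simp add: w_succ leibniz_mult_left[OF leibniz])

lemma prec_circ_right: "prec x (circ y z) = prec (succ y x) z - succ y (prec x z)"
  by (rule w_eqI)
    (simp add: w_succ w_prec algebra_simps
      leibniz_mult_left[OF leibniz, of y z] leibniz_mult_left[OF leibniz, of y _ z])

lemma prec_succ_left: "prec (succ x y) z = - prec (prec y x) z"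
  by (rule w_eqI) (simp add: w_succ w_prec leibniz_left_skew[OF leibniz, of z _ x])

lemma anti_pre_leibniz: "anti_pre_leibniz sA succ prec"
  by (rule anti_pre_leibnizI[OF A.vector_space_axioms _ _ leibniz
        succ_plus_prec succ_circ_left prec_circ_right prec_succ_left])
    (simp_all add: bilinear_map_def succ_linear prec_linear)

lemma leibniz_rep_neg_succ_prec:
  "leibniz_rep sA circ sA UNIV (\<lambda>x. - Lmul succ x) (\<lambda>x. - Rmul prec x)"
  unfolding leibniz_rep_def linear_on_def Lmul_def Rmul_def
  by (simp add: A.vector_space_axioms A.subspace_UNIV succ_circ_left prec_circ_right prec_succ_left
      algebra_simps)

lemma rep_equiv_flat:
  "rep_equiv_via sA UNIV (\<lambda>x. - Lmul succ x) (\<lambda>x. - Rmul prec x)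
     dual_scale (dual_space sA)
     (dual_op (Lmul circ)) (\<lambda>x. - dual_op (Lmul circ) x - dual_op (Rmul circ) x)
     (flat w)"
  using bij_betw_flat_dual_space[OF finite_dim bilinear nondeg]
  by (auto simp: rep_equiv_via_def linear_on_def bij_betw_def dual_scale_def dual_op_def
      Lmul_def Rmul_def w_succ w_prec fun_eq_iff)

lemma rep_equiv_transposed_flat:
  "rep_equiv_via sA UNIV (Lmul circ) (Rmul circ)
     dual_scale (dual_space sA)
     (\<lambda>x. - dual_op (Lmul succ) x) (\<lambda>x. dual_op (Lmul succ) x + dual_op (Rmul prec) x)
     (\<lambda>u v. w v u)"
proof -
  have "bilinear_form sA (\<lambda>u v. w v u)"
    using bilinear by (simp add: bilinear_form_def)
  moreover have "nondegenerate (\<lambda>u v. w v u)"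
    using nondeg unfolding nondegenerate_def by (metis w_skew neg_equal_0_iff_equal)
  ultimately have "bij_betw (\<lambda>u v. w v u) UNIV (dual_space sA)"
    using bij_betw_flat_dual_space[OF finite_dim] by simp
  then show ?thesis
    by (auto simp: rep_equiv_via_def linear_on_def bij_betw_def dual_scale_def dual_op_def
        Lmul_def Rmul_def w_succ w_prec fun_eq_iff)
qed

end

theorem theorem2p15:
  fixes sA :: "'k::field_char_0 \<Rightarrow> 'a::ab_group_add \<Rightarrow> 'a"
    and B :: "'a set"
    and circ :: "'a \<Rightarrow> 'a \<Rightarrow> 'a"
    and w :: "'a \<Rightarrow> 'a \<Rightarrow> 'k"
    and succ prec :: "'a \<Rightarrow> 'a \<Rightarrow> 'a"
  assumes fd: "finite_dimensional_vector_space sA B"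
    and leib: "leibniz_algebra sA circ"
    and bil: "bilinear_form sA w"
    and skew: "skew_symmetric w"
    and nondeg: "nondegenerate w"
    and cocyc: "two_cocycle circ w"
    and succ_def: "\<And>x y z. w (succ x y) z = w y (circ x z)"
    and prec_def: "\<And>x y z. w (prec x y) z = - w x (circ y z + circ z y)"
  shows "anti_pre_leibniz sA succ prec
    \<and> (\<forall>x y. succ x y + prec x y = circ x y)
    \<and> leibniz_rep sA circ sA UNIV (\<lambda>x. - Lmul succ x) (\<lambda>x. - Rmul prec x)
    \<and> leibniz_rep sA circ dual_scale (dual_space sA)
        (dual_op (Lmul circ)) (\<lambda>x. - dual_op (Lmul circ) x - dual_op (Rmul circ) x)
    \<and> rep_equiv_via sA UNIV (\<lambda>x. - Lmul succ x) (\<lambda>x. - Rmul prec x)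
        dual_scale (dual_space sA)
        (dual_op (Lmul circ)) (\<lambda>x. - dual_op (Lmul circ) x - dual_op (Rmul circ) x)
        (flat w)
    \<and> leibniz_rep sA circ sA UNIV (Lmul circ) (Rmul circ)
    \<and> leibniz_rep sA circ dual_scale (dual_space sA)
        (\<lambda>x. - dual_op (Lmul succ) x) (\<lambda>x. dual_op (Lmul succ) x + dual_op (Rmul prec) x)
    \<and> rep_equiv_via sA UNIV (Lmul circ) (Rmul circ)
        dual_scale (dual_space sA)
        (\<lambda>x. - dual_op (Lmul succ) x) (\<lambda>x. dual_op (Lmul succ) x + dual_op (Rmul prec) x)
        (\<lambda>u v. w v u)"
proof -
  interpret symplectic_leibniz sA B circ w succ prec
    by (rule symplectic_leibniz.intro) (fact assms)+
  have adjoint: "leibniz_rep sA circ sA UNIV (Lmul circ) (Rmul circ)"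
    by (rule leibniz_rep_adjoint[OF A.vector_space_axioms leib])
  note transfer = leibniz_rep_transfer[OF _ vector_space_dual_scale
      subspace_dual_space[OF A.vector_space_axioms]]
  show ?thesis
    using anti_pre_leibniz succ_plus_prec leibniz_rep_neg_succ_prec rep_equiv_flat
      transfer[OF leibniz_rep_neg_succ_prec rep_equiv_flat]
      adjoint rep_equiv_transposed_flat transfer[OF adjoint rep_equiv_transposed_flat]
    by blast
qed

end
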